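(* Let $q>9$ be a prime power with $q\equiv 1 \pmod 4$. Every signed graph $G$ with maximum average degree $\mathrm{mad}(G) < 4-\frac{8}{q+3}$ admits a homomorphism to the signed graph $SP_q^+$. That is, $\chi_s(\mathcal{M}_{4-\frac{8}{q+3}}) \le q+1$.
   Context: A signed graph $G=(V,E,s)$ is a finite simple graph $(V,E)$ (no loops, no parallel edges) together with a signature $s:E\to\{-1,+1\}$; edges with sign $+1$ are positive, with sign $-1$ negative. Switching a vertex $v$ reverses the sign of every edge incident to $v$; two signed graphs are switching equivalent if one can be obtained from the other by a sequence of switches. For signed graphs $G$ and $H$, a map $\varphi:V(G)\to V(H)$ is a homomorphism if there is a signed graph $G'$ switching equivalent to $G$ such that for every edge $uv$ of $G'$, $\varphi(u)\varphi(v)$ is an edge of $H$ with the same sign as $uv$ in $G'$. The chromatic number $\chi_s(G)$ is the minimum order of a signed graph $H$ such that $G$ admits a homomorphism to $H$; for a class $\mathcal{C}$ of signed graphs, $\chi_s(\mathcal{C})$ is the maximum of $\chi_s(G)$ over $G\in\mathcal{C}$. The maximum average degree $\mathrm{mad}(G)$ is the maximum of $2|E(H)|/|V(H)|$ over all (nonempty) subgraphs $H$ of the underlying graph; $\mathcal{M}_k$ denotes the class of signed graphs with $\mathrm{mad} < k$. For a prime power $q\equiv 1 \pmod 4$, the signed Paley graph $SP_q$ has vertex set the finite field $\mathbb{F}_q$, and any two distinct vertices $u,v$ are joined by a positive edge if $u-v$ is a square in $\mathbb{F}_q$ and by a negative edge otherwise. For a signed graph $H$, $H^+$ denotes the signed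 graph obtained from $H$ by adding one new vertex joined by a positive edge to every vertex of $H$. Thus $SP_q^+$ is a complete signed graph on $q+1$ vertices. *)

theory Defs
  imports Complex_Main
begin

text \<open>A signed graph is given by a vertex set V, an edge set E of 2-element
subsets of V, and a signature s on edges (True = positive, False = negative).\<close>

definition signed_graph :: "'v set \<Rightarrow> 'v set set \<Rightarrow> ('v set \<Rightarrow> bool) \<Rightarrow> bool" where
  "signed_graph V E s \<longleftrightarrow> finite V \<and> (\<forall>e\<in>E. e \<subseteq> V \<and> card e = 2)"

definition switch :: "'v \<Rightarrow> ('v set \<Rightarrow> bool) \<Rightarrow> ('v set \<Rightarrow> bool)" where
  "switch v s = (\<lambda>e. if v \<in> e then \<not> s e else s e)"

definition switching_equiv :: "'v set \<Rightarrow> ('v set \<Rightarrow> bool) \<Rightarrow> ('v set \<Rightarrow> bool) \<Rightarrow> bool" where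
  "switching_equiv V s s' \<longleftrightarrow> (\<lambda>a b. \<exists>v\<in>V. b = switch v a)\<^sup>*\<^sup>* s s'"

definition signed_hom ::
  "'v set \<Rightarrow> 'v set set \<Rightarrow> ('v set \<Rightarrow> bool) \<Rightarrow>
   'w set \<Rightarrow> 'w set set \<Rightarrow> ('w set \<Rightarrow> bool) \<Rightarrow> ('v \<Rightarrow> 'w) \<Rightarrow> bool" where
  "signed_hom V E s W F t \<phi> \<longleftrightarrow> (\<forall>v\<in>V. \<phi> v \<in> W) \<and>
     (\<exists>s'. switching_equiv V s s' \<and>
        (\<forall>u v. {u, v} \<in> E \<longrightarrow> {\<phi> u, \<phi> v} \<in> F \<and> t {\<phi> u, \<phi> v} = s' {u, v}))"

definition mad :: "'v set \<Rightarrow> 'v set set \<Rightarrow> real" where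
  "mad V E = Max {2 * real (card E') / real (card V') | V' E'.
                    V' \<subseteq> V \<and> V' \<noteq> {} \<and> E' \<subseteq> E \<and> (\<forall>e\<in>E'. e \<subseteq> V')}"

definition SP_V :: "'f::field set" where "SP_V = UNIV"
definition SP_E :: "'f::field set set" where "SP_E = {{u, v} | u v. u \<noteq> v}"
definition SP_sign :: "'f::field set \<Rightarrow> bool" where
  "SP_sign e \<longleftrightarrow> (\<exists>u v. e = {u, v} \<and> u \<noteq> v \<and> (\<exists>c. u - v = c * c))"

text \<open>H^+: add a new vertex (None) joined positively to all vertices of H.\<close>
definition plus_V :: "'a set \<Rightarrow> 'a option set" where
  "plus_V V = insert None (Some ` V)"
definition plus_E :: "'a set \<Rightarrow> 'a set set \<Rightarrow> 'a option set set" where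
  "plus_E V E = (image Some) ` E \<union> {{None, Some v} | v. v \<in> V}"
definition plus_sign :: "('a set \<Rightarrow> bool) \<Rightarrow> 'a option set \<Rightarrow> bool" where
  "plus_sign s e = (if None \<in> e then True else s (Some -` e))"

end

theory Submission
  imports Defs "HOL-Library.Cardinality" "HOL-Computational_Algebra.Nth_Powers"
begin

(*
  The homomorphism is built greedily along an elimination order.  The signed adjacency
  matrix of SP_q^+ is a symmetric conference matrix: distinct rows are orthogonal, which
  comes from the Jacobsthal sum  sum_u chi(u) chi(u - d) = -1  of the quadratic character.
  Counting with it shows that, for a set Y of at most three vertices of SP_q^+ and prescribed
  signs towards Y, at least N - (N + 2) |Y| / 4 vertices outside Y realise these signs up to
  switching, where N = q + 1.

  Let H be a set of vertices such that every vertex outside H has at most three neighbours in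
  H.  Discharging with the density bound (N + 2) |E(S)| < 2 N |S|, which is what
  mad < 4 - 8 / (N + 2) says, finds v in H with 4 l + (N + 2) d < 4 N, where d is the number
  of neighbours of v in H and l bounds the number of images that the neighbours of v outside
  H forbid for v.  Map H - {v} by induction; then v still has an admissible image.  The
  invariant that makes this work is coherence: two neighbours of a vertex not yet mapped
  that share an image must demand the same sign from it.
*)

section \<open>Quadratic characters of finite fields\<close>

lemma even_card_iff_even_card_fixpoints:
  assumes "finite A" and "\<And>x. x \<in> A \<Longrightarrow> f x \<in> A \<and> f (f x) = x"
  shows "even (card A) \<longleftrightarrow> even (card {x\<in>A. f x = x})"
  using assms
proof (induction "card A" arbitrary: A rule: less_induct)
  case less
  show ?case
  proof (cases "\<exists>x\<in>A. f x \<noteq> x")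
    case False
    then have "{x\<in>A. f x = x} = A" by auto
    then show ?thesis by simp
  next
    case True
    then obtain x where x: "x \<in> A" "f x \<noteq> x" by blast
    let ?A = "A - {x, f x}"
    have pair: "{x, f x} \<subseteq> A" "card {x, f x} = 2" using x less.prems(2) by auto
    have "card {x, f x} \<le> card A" using pair(1) less.prems(1) by (rule card_mono[rotated])
    then have card_A: "card A = card ?A + 2"
      using pair less.prems(1) by (simp add: card_Diff_subset)
    have closed: "f y \<in> ?A \<and> f (f y) = y" if "y \<in> ?A" for y
    proof -
      have "f (f y) = y" "f (f x) = x" "f y \<in> A" using that x(1) less.prems(2) by auto
      then show ?thesis using that by auto
    qed
    have "even (card ?A) \<longleftrightarrow> even (card {y\<in>?A. f y = y})"
      using card_A less.prems(1) closed by (intro less.hyps) simp_all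
    moreover have "{y\<in>?A. f y = y} = {y\<in>A. f y = y}" using x by (auto dest: less.prems(2))
    ultimately show ?thesis using card_A by simp
  qed
qed

lemma two_neq_zero_if_odd_card:
  assumes "odd (card (UNIV :: 'a::{finite,field} set))"
  shows "(2::'a) \<noteq> 0"
proof
  assume "(2::'a) = 0"
  then have "x + 1 + 1 = x" for x :: 'a by (metis add.assoc add_0_right one_add_one)
  then have "even CARD('a) \<longleftrightarrow> even (card {x::'a\<in>UNIV. x + 1 = x})"
    by (intro even_card_iff_even_card_fixpoints) auto
  then show False using assms by simp
qed

definition nonzero_squares :: "'a::field set" where
  "nonzero_squares = {a. a \<noteq> 0 \<and> is_square a}"

lemma nonzero_squaresE:
  assumes "x \<in> nonzero_squares"
  obtains r where "x = r\<^sup>2" "r \<noteq> 0"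
proof -
  have "x \<noteq> 0" "is_square x" using assms by (simp_all add: nonzero_squares_def)
  then show ?thesis using that by (auto elim: is_nth_powerE)
qed

lemma card_nonzero_squares:
  assumes "odd (card (UNIV :: 'a::{finite,field} set))"
  shows "2 * card (nonzero_squares :: 'a set) = CARD('a) - 1"
proof -
  have roots: "{c. c\<^sup>2 = s} = {r, - r}" if "s = r\<^sup>2" for s r :: 'a
    using that by (auto simp: power2_eq_iff)
  have two_roots: "card {c::'a. c\<^sup>2 = s} = 2" if s: "s \<in> nonzero_squares" for s
  proof -
    obtain r where r: "s = r\<^sup>2" "r \<noteq> 0" using s by (rule nonzero_squaresE)
    have "r \<noteq> - r" using r(2) two_neq_zero_if_odd_card[OF assms]
      by (simp add: eq_neg_iff_add_eq_0 mult_2[symmetric])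
    then show ?thesis using roots[OF r(1)] by simp
  qed
  have "UNIV - {0::'a} = (\<Union>s\<in>nonzero_squares. {c. c\<^sup>2 = s})"
    by (auto simp: nonzero_squares_def)
  then have "card (UNIV - {0::'a}) = card (\<Union>s\<in>nonzero_squares. {c::'a. c\<^sup>2 = s})"
    by (rule arg_cong)
  also have "\<dots> = (\<Sum>s\<in>nonzero_squares. card {c::'a. c\<^sup>2 = s})"
    by (rule card_UN_disjoint) auto
  also have "\<dots> = 2 * card (nonzero_squares :: 'a set)" using two_roots by simp
  finally show ?thesis by (simp add: card_Diff_singleton)
qed

lemma square_minus_one:
  assumes "card (UNIV :: 'a::{finite,field} set) mod 4 = 1"
  shows "is_square (-1 :: 'a)"
proof (rule ccontr)
  assume nonsquare: "\<not> is_square (-1 :: 'a)"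
  have "odd CARD('a)" using assms by presburger
  then have "2 * card (nonzero_squares :: 'a set) = CARD('a) - 1"
    by (rule card_nonzero_squares)
  then have "even (card (nonzero_squares :: 'a set))" using assms by presburger
  moreover have "even (card (nonzero_squares :: 'a set))
      \<longleftrightarrow> even (card {x::'a \<in> nonzero_squares. inverse x = x})"
  proof (rule even_card_iff_even_card_fixpoints)
    fix x :: 'a
    assume "x \<in> nonzero_squares"
    then obtain r where "x = r\<^sup>2" "r \<noteq> 0" by (rule nonzero_squaresE)
    then show "inverse x \<in> nonzero_squares \<and> inverse (inverse x) = x"
      by (auto simp: nonzero_squares_def simp flip: power_inverse)
  qed simp
  moreover have "{x::'a \<in> nonzero_squares. inverse x = x} = {1}"
  proof -
    have "inverse x = x \<longleftrightarrow> x = 1 \<or> x = -1" if "x \<noteq> 0" for x :: 'a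
    proof -
      have "inverse x = x \<longleftrightarrow> x\<^sup>2 = 1\<^sup>2"
        using that by (auto simp: power2_eq_square field_simps)
      then show ?thesis using power2_eq_iff[of x 1] by simp
    qed
    then show ?thesis using nonsquare by (auto simp: nonzero_squares_def)
  qed
  ultimately show False by simp
qed

lemma card_nonsquares:
  assumes "odd (card (UNIV :: 'a::{finite,field} set))"
  shows "card {a::'a. \<not> is_square a} = card (nonzero_squares :: 'a set)"
proof -
  have "UNIV = insert (0::'a) (nonzero_squares \<union> {a. \<not> is_square a})"
    by (auto simp: nonzero_squares_def)
  moreover have "card (insert (0::'a) (nonzero_squares \<union> {a. \<not> is_square a}))
      = Suc (card (nonzero_squares :: 'a set) + card {a::'a. \<not> is_square a})"
    by (subst card_Un_disjoint[symmetric]) (auto simp: nonzero_squares_def)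
  ultimately have "CARD('a) = Suc (card (nonzero_squares :: 'a set) + card {a::'a. \<not> is_square a})"
    by simp
  then show ?thesis using card_nonzero_squares[OF assms] by simp
qed

lemma square_times_nonsquare:
  fixes a b :: "'a::field"
  assumes "is_square a" "a \<noteq> 0" "\<not> is_square b"
  shows "\<not> is_square (a * b)"
proof
  assume "is_square (a * b)"
  then obtain c where c: "a * b = c\<^sup>2" by (rule is_nth_powerE)
  obtain r where r: "a = r\<^sup>2" using assms(1) by (rule is_nth_powerE)
  then have "b = (c / r)\<^sup>2" using c assms(2) by (simp add: power_divide field_simps)
  then show False using assms(3) by simp
qed

lemma nonsquare_times_nonsquare:
  fixes a b :: "'a::{finite,field}"
  assumes "odd (card (UNIV :: 'a set))" "\<not> is_square a" "\<not> is_square b"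
  shows "is_square (a * b)"
proof -
  have a: "a \<noteq> 0" using assms(2) by auto
  have into: "(\<lambda>s. a * s) ` nonzero_squares \<subseteq> {x. \<not> is_square x}"
    using square_times_nonsquare[of _ a] assms(2) by (auto simp: nonzero_squares_def mult.commute)
  have "inj_on (\<lambda>s. a * s) nonzero_squares" using a by (auto intro: inj_onI)
  then have "card ((\<lambda>s. a * s) ` nonzero_squares) = card {x::'a. \<not> is_square x}"
    using card_nonsquares[OF assms(1)] by (simp add: card_image)
  then have "(\<lambda>s. a * s) ` nonzero_squares = {x. \<not> is_square x}"
    using into by (intro card_subset_eq) auto
  then obtain s where "s \<in> nonzero_squares" "b = a * s" using assms(3) by blast
  then obtain r where "b = a * r\<^sup>2" by (auto elim: nonzero_squaresE)
  then have "a * b = (a * r)\<^sup>2" by (simp add: power2_eq_square)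
  then show ?thesis by simp
qed

definition quad_char :: "'a::field \<Rightarrow> int" where
  "quad_char a = (if a = 0 then 0 else if is_square a then 1 else -1)"

lemma quad_char_mult:
  fixes a b :: "'a::{finite,field}"
  assumes "odd (card (UNIV :: 'a set))"
  shows "quad_char (a * b) = quad_char a * quad_char b"
  using square_times_nonsquare[of a b] square_times_nonsquare[of b a]
    nonsquare_times_nonsquare[OF assms, of a b] is_nth_power_mult[of 2 a b]
  by (auto simp: quad_char_def mult.commute)

lemma sum_quad_char:
  assumes "odd (card (UNIV :: 'a::{finite,field} set))"
  shows "(\<Sum>a::'a\<in>UNIV. quad_char a) = 0"
proof -
  have "quad_char a = of_bool (a \<in> nonzero_squares) - of_bool (\<not> is_square a)" for a :: 'a
    by (auto simp: quad_char_def nonzero_squares_def)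
  then show ?thesis
    using card_nonsquares[OF assms] by (simp add: sum_subtractf Int_def)
qed

lemma sum_shift:
  fixes f :: "'a::{finite,ab_group_add} \<Rightarrow> 'b::comm_monoid_add"
  shows "(\<Sum>z\<in>UNIV. f (z - a)) = (\<Sum>z\<in>UNIV. f z)"
  by (rule sum.reindex_bij_witness[where i="\<lambda>z. z + a" and j="\<lambda>z. z - a"]) auto

lemma quad_char_autocorrelation:
  fixes d :: "'a::{finite,field}"
  assumes "odd (card (UNIV :: 'a set))" "d \<noteq> 0"
  shows "(\<Sum>u\<in>UNIV. quad_char u * quad_char (u - d)) = -1"
proof -
  have "(\<Sum>u\<in>UNIV. quad_char u * quad_char (u - d))
      = (\<Sum>u\<in>UNIV - {0}. quad_char u * quad_char (u - d))"
    by (rule sum.mono_neutral_right) (auto simp: quad_char_def)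
  also have "\<dots> = (\<Sum>u\<in>UNIV - {0}. quad_char (1 - d / u))"
  proof (rule sum.cong[OF refl])
    fix u :: 'a
    assume "u \<in> UNIV - {0}"
    then have "u - d = u * (1 - d / u)" "quad_char u * quad_char u = 1"
      by (auto simp: field_simps quad_char_def)
    then show "quad_char u * quad_char (u - d) = quad_char (1 - d / u)"
      using quad_char_mult[OF assms(1)] by (metis mult.assoc mult_1)
  qed
  also have "\<dots> = (\<Sum>w\<in>UNIV - {1::'a}. quad_char w)"
    by (rule sum.reindex_bij_witness[where i="\<lambda>w. d / (1 - w)" and j="\<lambda>u. 1 - d / u"])
      (use assms(2) in auto)
  also have "\<dots> = - quad_char (1::'a)"
    using sum_quad_char[OF assms(1)] by (simp add: sum_diff1)
  finally show ?thesis by (simp add: quad_char_def)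
qed

section \<open>The signed graph SP_q^+\<close>

lemma SP_sign_iff:
  fixes a b :: "'a::{finite,field}"
  assumes "card (UNIV :: 'a set) mod 4 = 1" "a \<noteq> b"
  shows "SP_sign {a, b} \<longleftrightarrow> is_square (a - b)"
proof -
  have "is_square (b - a) \<longleftrightarrow> is_square (a - b)"
    using is_nth_power_mult[OF square_minus_one[OF assms(1)], of "a - b"]
      is_nth_power_mult[OF square_minus_one[OF assms(1)], of "b - a"]
    by auto
  moreover have "SP_sign {a, b} \<longleftrightarrow> is_square (a - b) \<or> is_square (b - a)"
    using assms(2) by (auto simp: SP_sign_def doubleton_eq_iff is_nth_power_def power2_eq_square)
  ultimately show ?thesis by blast
qed

definition SP_plus_adj :: "'a::field option \<Rightarrow> 'a option \<Rightarrow> int" where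
  "SP_plus_adj x y = (if x = y then 0 else if plus_sign SP_sign {x, y} then 1 else -1)"

lemma SP_plus_adj_self [simp]: "SP_plus_adj x x = 0"
  by (simp add: SP_plus_adj_def)

lemma SP_plus_adj_None [simp]:
  "SP_plus_adj None (Some b) = 1" "SP_plus_adj (Some a) None = 1"
  by (simp_all add: SP_plus_adj_def plus_sign_def)

definition sgn_bool :: "bool \<Rightarrow> int" where
  "sgn_bool b = (if b then 1 else -1)"

lemma SP_plus_adj_eq_sgn_bool:
  "x \<noteq> y \<Longrightarrow> SP_plus_adj x y = sgn_bool (plus_sign SP_sign {x, y})"
  by (simp add: SP_plus_adj_def sgn_bool_def)

lemma SP_plus_adj_Some:
  fixes a b :: "'a::{finite,field}"
  assumes "card (UNIV :: 'a set) mod 4 = 1"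
  shows "SP_plus_adj (Some a) (Some b) = quad_char (a - b)"
proof -
  have "Some -` {Some a, Some b} = {a, b}" by auto
  then show ?thesis
    using SP_sign_iff[OF assms, of a b] by (simp add: SP_plus_adj_def plus_sign_def quad_char_def)
qed

lemma sum_UNIV_option:
  fixes f :: "'a::finite option \<Rightarrow> 'b::comm_monoid_add"
  shows "(\<Sum>x\<in>UNIV. f x) = f None + (\<Sum>z\<in>UNIV. f (Some z))"
  by (simp add: UNIV_option_conv sum.reindex)

lemma SP_plus_adj_orthogonal:
  fixes y y' :: "'a::{finite,field} option"
  assumes q: "card (UNIV :: 'a set) mod 4 = 1" and "y \<noteq> y'"
  shows "(\<Sum>x\<in>UNIV. SP_plus_adj x y * SP_plus_adj x y') = 0"
proof -
  have odd: "odd CARD('a)" using q by presburger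
  have None_Some: "(\<Sum>x\<in>UNIV. SP_plus_adj x None * SP_plus_adj x (Some b)) = 0" for b :: 'a
    using sum_shift[of quad_char b] sum_quad_char[OF odd]
    by (simp add: sum_UNIV_option SP_plus_adj_Some[OF q])
  show ?thesis
  proof (cases y; cases y')
    fix a b assume "y = Some a" "y' = Some b"
    then have "a \<noteq> b" using assms(2) by simp
    have "(\<Sum>z\<in>UNIV. quad_char (z - a) * quad_char (z - b))
        = (\<Sum>z\<in>UNIV. quad_char (z - a) * quad_char ((z - a) - (b - a)))"
      by simp
    also have "\<dots> = -1"
      using sum_shift[of "\<lambda>u. quad_char u * quad_char (u - (b - a))" a]
        quad_char_autocorrelation[OF odd, of "b - a"] \<open>a \<noteq> b\<close> by simp
    finally show ?thesis using \<open>y = Some a\<close> \<open>y' = Some b\<close>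
      by (simp add: sum_UNIV_option SP_plus_adj_Some[OF q])
  qed (use assms(2) None_Some in \<open>auto simp: mult.commute\<close>)
qed

lemma int_card_eq_sum_of_bool:
  assumes "finite A" "B \<subseteq> A"
  shows "int (card B) = (\<Sum>x\<in>A. of_bool (x \<in> B))"
  using assms by (simp add: Int_absorb1 Int_def[symmetric])

lemma sum_SP_plus_adj_outside:
  fixes Y :: "'a::{finite,field} option set"
  assumes q: "card (UNIV :: 'a set) mod 4 = 1" and "y \<in> Y" "y' \<in> Y" "y \<noteq> y'"
  shows "(\<Sum>x\<in>-Y. SP_plus_adj x y * SP_plus_adj x y') = - (\<Sum>z\<in>Y. SP_plus_adj z y * SP_plus_adj z y')"
  using SP_plus_adj_orthogonal[OF q assms(4)] sum.union_disjoint[of Y "-Y"]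
  by (simp add: Compl_eq_Diff_UNIV sum_diff)

(* The images available for a new vertex whose neighbours are mapped onto Y, when its edge
   to y must have sign tau y after switching; eta records whether the new vertex is switched. *)
definition extensions :: "('c set \<Rightarrow> bool) \<Rightarrow> 'c set \<Rightarrow> ('c \<Rightarrow> bool) \<Rightarrow> 'c set" where
  "extensions t Y \<tau> = {x. x \<notin> Y \<and> (\<exists>\<eta>. \<forall>y\<in>Y. t {x, y} \<longleftrightarrow> (\<eta> \<longleftrightarrow> \<tau> y))}"

lemma card_extensions_SP_plus_2:
  fixes y1 y2 :: "'a::{finite,field} option"
  assumes q: "card (UNIV :: 'a set) mod 4 = 1" and "y1 \<noteq> y2"
  shows "2 * card (extensions (plus_sign SP_sign) {y1, y2} \<tau>) + 1 = CARD('a)"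
proof -
  let ?E = "extensions (plus_sign SP_sign) {y1, y2} \<tau>"
  let ?e = "\<lambda>y. sgn_bool (\<tau> y)"
  have pointwise: "2 * of_bool (x \<in> ?E)
      = 1 + ?e y1 * ?e y2 * (SP_plus_adj x y1 * SP_plus_adj x y2)" if "x \<in> - {y1, y2}" for x
    using that
    by (cases "plus_sign SP_sign {x, y1}"; cases "plus_sign SP_sign {x, y2}";
        cases "\<tau> y1"; cases "\<tau> y2")
      (auto simp: extensions_def SP_plus_adj_eq_sgn_bool sgn_bool_def)
  have "2 * int (card ?E) = (\<Sum>x\<in>- {y1, y2}. 2 * of_bool (x \<in> ?E))"
    by (subst int_card_eq_sum_of_bool[of "- {y1, y2}"]) (auto simp: extensions_def sum_distrib_left)
  also have "\<dots> = int (card (- {y1, y2}))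
      + ?e y1 * ?e y2 * (\<Sum>x\<in>- {y1, y2}. SP_plus_adj x y1 * SP_plus_adj x y2)"
    using pointwise by (simp add: sum.distrib sum_distrib_left)
  also have "\<dots> = int (card (- {y1, y2}))"
    using sum_SP_plus_adj_outside[OF q, of y1 "{y1, y2}" y2] assms(2) by simp
  finally show ?thesis
    using assms(2) by (simp add: Compl_eq_Diff_UNIV card_Diff_subset card_UNIV_option)
qed

lemma card_extensions_SP_plus_3:
  fixes y1 y2 y3 :: "'a::{finite,field} option"
  assumes q: "card (UNIV :: 'a set) mod 4 = 1" and "y1 \<noteq> y2" "y1 \<noteq> y3" "y2 \<noteq> y3"
  shows "CARD('a) \<le> 4 * card (extensions (plus_sign SP_sign) {y1, y2, y3} \<tau>) + 5"
proof -
  let ?Y = "{y1, y2, y3}"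
  let ?E = "extensions (plus_sign SP_sign) ?Y \<tau>"
  let ?e = "\<lambda>y. sgn_bool (\<tau> y)"
  let ?c = "\<lambda>a b. ?e a * ?e b * (\<Sum>x\<in>-?Y. SP_plus_adj x a * SP_plus_adj x b)"
  have pointwise: "4 * of_bool (x \<in> ?E) = 1
      + ?e y1 * ?e y2 * (SP_plus_adj x y1 * SP_plus_adj x y2)
      + ?e y1 * ?e y3 * (SP_plus_adj x y1 * SP_plus_adj x y3)
      + ?e y2 * ?e y3 * (SP_plus_adj x y2 * SP_plus_adj x y3)" if "x \<in> - ?Y" for x
    using that
    by (cases "plus_sign SP_sign {x, y1}"; cases "plus_sign SP_sign {x, y2}";
        cases "plus_sign SP_sign {x, y3}"; cases "\<tau> y1"; cases "\<tau> y2"; cases "\<tau> y3")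
      (auto simp: extensions_def SP_plus_adj_eq_sgn_bool sgn_bool_def)
  have "4 * int (card ?E) = (\<Sum>x\<in>-?Y. 4 * of_bool (x \<in> ?E))"
    by (subst int_card_eq_sum_of_bool[of "-?Y"]) (auto simp: extensions_def sum_distrib_left)
  also have "\<dots> = int (card (-?Y)) + ?c y1 y2 + ?c y1 y3 + ?c y2 y3"
    using pointwise by (simp add: sum.distrib sum_distrib_left)
  finally have count: "4 * int (card ?E) = int (card (-?Y)) + ?c y1 y2 + ?c y1 y3 + ?c y2 y3" .
  have bound: "- 1 \<le> ?c a b" if ab: "a \<in> ?Y" "b \<in> ?Y" "a \<noteq> b" for a b
  proof -
    obtain z where "?Y = {a, b, z}" "z \<noteq> a" "z \<noteq> b" using ab assms(2-4) by auto
    then have "?c a b = - (?e a * ?e b * (SP_plus_adj z a * SP_plus_adj z b))"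
      using sum_SP_plus_adj_outside[OF q, of a ?Y b] ab by simp
    then show ?thesis by (simp add: SP_plus_adj_def sgn_bool_def)
  qed
  have "card (-?Y) + 3 = CARD('a) + 1"
  proof -
    have "card ?Y \<le> CARD('a option)" by (rule card_mono) auto
    then show ?thesis
      using assms(2-4) by (simp add: Compl_eq_Diff_UNIV card_Diff_subset card_UNIV_option)
  qed
  moreover have "- 1 \<le> ?c y1 y2" "- 1 \<le> ?c y1 y3" "- 1 \<le> ?c y2 y3"
    using assms(2-4) by (auto intro: bound)
  ultimately have "int CARD('a) \<le> 4 * int (card ?E) + 5" using count by linarith
  then show ?thesis by linarith
qed

lemma card_extensions_SP_plus:
  fixes Y :: "'a::{finite,field} option set"
  assumes q: "card (UNIV :: 'a set) mod 4 = 1" and "card Y \<le> 3"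
  shows "4 * CARD('a option)
    \<le> 4 * card (extensions (plus_sign SP_sign) Y \<tau>) + (CARD('a option) + 2) * card Y"
proof -
  have N: "CARD('a option) = CARD('a) + 1" by (simp add: card_UNIV_option)
  consider "Y = {}" | y where "Y = {y}" | y1 y2 where "Y = {y1, y2}" "y1 \<noteq> y2"
    | y1 y2 y3 where "Y = {y1, y2, y3}" "y1 \<noteq> y2" "y1 \<noteq> y3" "y2 \<noteq> y3"
    using assms(2) by (metis card_0_eq card_1_singletonE card_2_iff card_3_iff finite le_SucE
        numeral_3_eq_3 numeral_2_eq_2 One_nat_def le_zero_eq)
  then show ?thesis
  proof cases
    case 1
    then have "extensions (plus_sign SP_sign) Y \<tau> = UNIV" by (simp add: extensions_def)
    then show ?thesis using 1 by simp
  next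
    case (2 y)
    then have "extensions (plus_sign SP_sign) Y \<tau> = - {y}"
      by (auto simp: extensions_def intro: exI[of _ "plus_sign SP_sign {_, y} = \<tau> y"])
    then show ?thesis
      using 2 by (simp add: Compl_eq_Diff_UNIV card_Diff_subset N)
  next
    case (3 y1 y2)
    then show ?thesis using card_extensions_SP_plus_2[OF q 3(2), of \<tau>] N by simp
  next
    case (4 y1 y2 y3)
    then show ?thesis using card_extensions_SP_plus_3[OF q 4(2-4), of \<tau>] N by simp
  qed
qed

section \<open>Degrees and loads\<close>

definition neighbors_in :: "'v set set \<Rightarrow> 'v set \<Rightarrow> 'v \<Rightarrow> 'v set" where
  "neighbors_in E H v = {u\<in>H. {u, v} \<in> E}"

definition degree_in :: "'v set set \<Rightarrow> 'v set \<Rightarrow> 'v \<Rightarrow> nat" where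
  "degree_in E H v = card (neighbors_in E H v)"

lemma finite_neighbors_in [simp]: "finite H \<Longrightarrow> finite (neighbors_in E H v)"
  by (simp add: neighbors_in_def)

lemma degree_in_mono:
  "finite H \<Longrightarrow> H' \<subseteq> H \<Longrightarrow> degree_in E H' w \<le> degree_in E H w"
  unfolding degree_in_def by (intro card_mono) (auto simp: neighbors_in_def)

lemma degree_in_eq_card_incident_edges:
  assumes "\<forall>e\<in>E. card e = 2" "v \<in> H"
  shows "degree_in E H v = card {e\<in>E. e \<subseteq> H \<and> v \<in> e}"
proof -
  have "inj_on (\<lambda>u. {u, v}) (neighbors_in E H v)"
    by (auto simp: inj_on_def doubleton_eq_iff)
  moreover have "(\<lambda>u. {u, v}) ` neighbors_in E H v = {e\<in>E. e \<subseteq> H \<and> v \<in> e}"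
  proof (intro equalityI subsetI)
    fix e assume e: "e \<in> {e\<in>E. e \<subseteq> H \<and> v \<in> e}"
    then obtain x y where "e = {x, y}" using assms(1) by (auto simp: card_2_iff)
    then obtain u where "e = {u, v}" using e by (auto simp: insert_commute)
    then show "e \<in> (\<lambda>u. {u, v}) ` neighbors_in E H v" using e by (auto simp: neighbors_in_def)
  qed (use assms(2) in \<open>auto simp: neighbors_in_def\<close>)
  ultimately show ?thesis by (simp add: degree_in_def card_image[symmetric])
qed

lemma sum_degree_in:
  assumes "\<forall>e\<in>E. card e = 2" "finite H"
  shows "(\<Sum>v\<in>H. degree_in E H v) = 2 * card {e\<in>E. e \<subseteq> H}"
proof -
  let ?EH = "{e\<in>E. e \<subseteq> H}"
  have "finite ?EH" by (rule finite_subset[of _ "Pow H"]) (use assms(2) in auto)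
  have "(\<Sum>v\<in>H. degree_in E H v) = (\<Sum>v\<in>H. card {e\<in>?EH. v \<in> e})"
    using assms(1) by (intro sum.cong) (simp_all add: degree_in_eq_card_incident_edges conj_assoc)
  also have "\<dots> = (\<Sum>v\<in>H. \<Sum>e\<in>?EH. of_bool (v \<in> e))"
    using \<open>finite ?EH\<close> by (simp add: Int_def)
  also have "\<dots> = (\<Sum>e\<in>?EH. \<Sum>v\<in>H. of_bool (v \<in> e))" by (rule sum.swap)
  also have "\<dots> = (\<Sum>e\<in>?EH. 2)"
    using assms by (intro sum.cong) (auto simp: Int_absorb1 Int_absorb2)
  finally show ?thesis by simp
qed

lemma card_edges_Un_ge:
  assumes "finite H" "finite W" "H \<inter> W = {}"
  shows "card {e\<in>E. e \<subseteq> H} + (\<Sum>w\<in>W. degree_in E H w) \<le> card {e\<in>E. e \<subseteq> H \<union> W}"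
proof -
  let ?star = "\<lambda>w. (\<lambda>h. {h, w}) ` neighbors_in E H w"
  have star_card: "card (?star w) = degree_in E H w" if "w \<in> W" for w
    using that assms(3)
    by (subst card_image) (auto simp: degree_in_def inj_on_def neighbors_in_def doubleton_eq_iff)
  have "(\<Sum>w\<in>W. degree_in E H w) = card (\<Union>w\<in>W. ?star w)"
    using assms star_card
    by (subst card_UN_disjoint) (auto simp: neighbors_in_def doubleton_eq_iff)
  moreover have "card {e\<in>E. e \<subseteq> H} + card (\<Union>w\<in>W. ?star w)
      = card ({e\<in>E. e \<subseteq> H} \<union> (\<Union>w\<in>W. ?star w))"
    using assms by (intro card_Un_disjoint[symmetric]) (auto simp: neighbors_in_def)
  moreover have "card ({e\<in>E. e \<subseteq> H} \<union> (\<Union>w\<in>W. ?star w)) \<le> card {e\<in>E. e \<subseteq> H \<union> W}"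
    using assms
    by (intro card_mono finite_subset[rotated, of _ "Pow (H \<union> W)"]) (auto simp: neighbors_in_def)
  ultimately show ?thesis by simp
qed

definition load :: "'v set \<Rightarrow> 'v set set \<Rightarrow> 'v set \<Rightarrow> 'v \<Rightarrow> nat" where
  "load V E H v = (\<Sum>w\<in>neighbors_in E (V - H) v. degree_in E H w - 1)"

lemma sum_load:
  assumes "finite V" "H \<subseteq> V"
  shows "(\<Sum>v\<in>H. load V E H v) = (\<Sum>w\<in>V - H. degree_in E H w * (degree_in E H w - 1))"
proof -
  have "(\<Sum>v\<in>H. load V E H v)
      = (\<Sum>v\<in>H. \<Sum>w\<in>V - H. if {w, v} \<in> E then degree_in E H w - 1 else 0)"
    unfolding load_def neighbors_in_def using assms by (simp only: sum.inter_filter finite_Diff)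
  also have "\<dots> = (\<Sum>w\<in>V - H. \<Sum>v\<in>H. if {w, v} \<in> E then degree_in E H w - 1 else 0)"
    by (rule sum.swap)
  also have "\<dots> = (\<Sum>w\<in>V - H. degree_in E H w * (degree_in E H w - 1))"
  proof (rule sum.cong[OF refl])
    fix w
    have "neighbors_in E H w = {v\<in>H. {w, v} \<in> E}" by (auto simp: neighbors_in_def insert_commute)
    then show "(\<Sum>v\<in>H. if {w, v} \<in> E then degree_in E H w - 1 else 0)
        = degree_in E H w * (degree_in E H w - 1)"
      using finite_subset[OF assms(2,1)] by (simp add: degree_in_def sum.If_cases Int_def)
  qed
  finally show ?thesis .
qed

lemma reducible_degree_le_3:
  fixes l d N :: nat
  assumes "4 * l + (N + 2) * d < 4 * N"
  shows "d \<le> 3"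
proof (rule ccontr)
  assume "\<not> d \<le> 3"
  then have "(N + 2) * 4 \<le> (N + 2) * d" by (intro mult_le_mono2) simp
  then show False using assms by (simp add: algebra_simps)
qed

(* A vertex outside H with d neighbours in H contributes d (d - 1) to the total load, which
   is 0 for d \<le> 1 and satisfies 4 d (d - 1) + 4 N \<le> 2 (N + 2) d for d = 2, 3. *)
lemma sum_load_le:
  fixes N :: nat
  assumes finV: "finite V" and H: "H \<subseteq> V" and N: "6 \<le> N"
    and outside: "\<forall>w\<in>V - H. degree_in E H w \<le> 3"
  defines "W \<equiv> {w\<in>V - H. 2 \<le> degree_in E H w}"
  shows "4 * (\<Sum>v\<in>H. load V E H v) + 4 * N * card W \<le> 2 * (N + 2) * (\<Sum>w\<in>W. degree_in E H w)"
proof -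
  define d where "d = degree_in E H"
  have "(\<Sum>v\<in>H. load V E H v) = (\<Sum>w\<in>W. d w * (d w - 1))"
    unfolding sum_load[OF finV H] d_def W_def
    by (rule sum.mono_neutral_right) (use finV in auto)
  moreover have "4 * (d w * (d w - 1)) + 4 * N \<le> 2 * (N + 2) * d w" if "w \<in> W" for w
  proof -
    have "d w = 2 \<or> d w = 3" using that outside by (force simp: W_def d_def)
    then show ?thesis using N by auto
  qed
  then have "(\<Sum>w\<in>W. 4 * (d w * (d w - 1)) + 4 * N) \<le> (\<Sum>w\<in>W. 2 * (N + 2) * d w)"
    by (rule sum_mono)
  moreover have "(\<Sum>w\<in>W. 4 * (d w * (d w - 1)) + 4 * N)
      = 4 * (\<Sum>w\<in>W. d w * (d w - 1)) + card W * (4 * N)"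
    by (simp add: sum.distrib sum_distrib_left)
  moreover have "(\<Sum>w\<in>W. 2 * (N + 2) * d w) = 2 * (N + 2) * (\<Sum>w\<in>W. d w)"
    by (simp add: sum_distrib_left)
  ultimately show ?thesis by (simp add: d_def mult.commute)
qed

lemma exists_reducible_vertex:
  fixes N :: nat
  assumes finV: "finite V" and edges: "\<forall>e\<in>E. e \<subseteq> V \<and> card e = 2"
    and sparse: "\<And>S. S \<subseteq> V \<Longrightarrow> S \<noteq> {} \<Longrightarrow> (N + 2) * card {e\<in>E. e \<subseteq> S} < 2 * N * card S"
    and N: "6 \<le> N" and H: "H \<subseteq> V" "H \<noteq> {}"
    and outside: "\<forall>w\<in>V - H. degree_in E H w \<le> 3"
  shows "\<exists>v\<in>H. 4 * load V E H v + (N + 2) * degree_in E H v < 4 * N"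
proof (rule ccontr)
  assume "\<not> ?thesis"
  then have stuck: "4 * N \<le> 4 * load V E H v + (N + 2) * degree_in E H v" if "v \<in> H" for v
    using that by (simp add: not_less)
  define d where "d = degree_in E H"
  define W where "W = {w\<in>V - H. 2 \<le> d w}"
  have finH: "finite H" and finW: "finite W" and disj: "H \<inter> W = {}" and "W \<subseteq> V"
    using finV H(1) by (auto simp: W_def intro: finite_subset)
  have "(\<Sum>v\<in>H. 4 * N) \<le> (\<Sum>v\<in>H. 4 * load V E H v + (N + 2) * d v)"
    unfolding d_def by (rule sum_mono) (rule stuck)
  then have "4 * N * card H \<le> 4 * (\<Sum>v\<in>H. load V E H v) + (N + 2) * (\<Sum>v\<in>H. d v)"
    by (simp only: sum.distrib sum_distrib_left[symmetric] sum_constant) (simp add: ac_simps)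
  moreover have "(\<Sum>v\<in>H. d v) = 2 * card {e\<in>E. e \<subseteq> H}"
    unfolding d_def using edges finH by (intro sum_degree_in) auto
  moreover have "4 * (\<Sum>v\<in>H. load V E H v) + 4 * N * card W \<le> 2 * (N + 2) * (\<Sum>w\<in>W. d w)"
    unfolding W_def d_def using finV H(1) N outside by (rule sum_load_le)
  ultimately have "4 * N * (card H + card W)
      \<le> 2 * (N + 2) * (card {e\<in>E. e \<subseteq> H} + (\<Sum>w\<in>W. d w))"
    by (simp add: algebra_simps)
  also have "\<dots> \<le> 2 * (N + 2) * card {e\<in>E. e \<subseteq> H \<union> W}"
    unfolding d_def by (intro mult_le_mono2 card_edges_Un_ge[OF finH finW disj])
  also have "\<dots> < 4 * N * (card H + card W)"
    using sparse[of "H \<union> W"] H \<open>W \<subseteq> V\<close> card_Un_disjoint[OF finH finW disj] by simp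
  finally show False by simp
qed

section \<open>Extending a switched homomorphism vertex by vertex\<close>

definition switched_hom_on ::
  "'v set set \<Rightarrow> ('v set \<Rightarrow> bool) \<Rightarrow> ('c set \<Rightarrow> bool) \<Rightarrow> 'v set \<Rightarrow> ('v \<Rightarrow> 'c) \<Rightarrow> ('v \<Rightarrow> bool) \<Rightarrow> bool"
  where "switched_hom_on E s t H c \<beta> \<longleftrightarrow>
    (\<forall>u\<in>H. \<forall>v\<in>H. {u, v} \<in> E \<longrightarrow> c u \<noteq> c v \<and> (t {c u, c v} \<longleftrightarrow> (s {u, v} \<longleftrightarrow> (\<beta> u \<longleftrightarrow> \<beta> v))))"

(* When w is mapped later, its edges to a and b go to the same edge of the target, so after
   switching they must carry equal signs. *)
definition coherent_frontier ::
  "'v set \<Rightarrow> 'v set set \<Rightarrow> ('v set \<Rightarrow> bool) \<Rightarrow> 'v set \<Rightarrow> ('v \<Rightarrow> 'c) \<Rightarrow> ('v \<Rightarrow> bool) \<Rightarrow> bool"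
  where "coherent_frontier V E s H c \<beta> \<longleftrightarrow>
    (\<forall>w\<in>V - H. \<forall>a\<in>H. \<forall>b\<in>H. {w, a} \<in> E \<longrightarrow> {w, b} \<in> E \<longrightarrow> c a = c b \<longrightarrow>
      ((s {w, a} \<longleftrightarrow> \<beta> a) \<longleftrightarrow> (s {w, b} \<longleftrightarrow> \<beta> b)))"

definition forbidden_colors ::
  "'v set \<Rightarrow> 'v set set \<Rightarrow> 'v set \<Rightarrow> ('v \<Rightarrow> 'c) \<Rightarrow> 'v \<Rightarrow> 'c set"
  where "forbidden_colors V E H c v =
    c ` (\<Union>w\<in>neighbors_in E (V - H) v. neighbors_in E H w - {v})"

lemma card_forbidden_colors_le_load:
  assumes "finite V" "H \<subseteq> V" "v \<in> H"
  shows "card (forbidden_colors V E H c v) \<le> load V E H v"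
proof -
  have finH: "finite H" using assms(1,2) by (rule finite_subset[rotated])
  have "card (forbidden_colors V E H c v)
      \<le> card (\<Union>w\<in>neighbors_in E (V - H) v. neighbors_in E H w - {v})"
    unfolding forbidden_colors_def using finH assms(1) by (intro card_image_le) auto
  also have "\<dots> \<le> (\<Sum>w\<in>neighbors_in E (V - H) v. card (neighbors_in E H w - {v}))"
    using assms(1) by (intro card_UN_le) simp
  also have "\<dots> = load V E H v"
    unfolding load_def
  proof (rule sum.cong[OF refl])
    fix w assume "w \<in> neighbors_in E (V - H) v"
    then have "v \<in> neighbors_in E H w"
      using assms(3) by (auto simp: neighbors_in_def insert_commute)
    then show "card (neighbors_in E H w - {v}) = degree_in E H w - 1"
      using finH by (simp add: degree_in_def)
  qed
  finally show ?thesis .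
qed

lemma switched_hom_on_extend:
  assumes hom: "switched_hom_on E s t (H - {v}) c \<beta>" and loopfree: "{v, v} \<notin> E"
    and new: "\<forall>a\<in>neighbors_in E H v. c a \<noteq> x \<and> (t {x, c a} \<longleftrightarrow> (\<eta> \<longleftrightarrow> (s {v, a} \<longleftrightarrow> \<beta> a)))"
  shows "switched_hom_on E s t H (c(v := x)) (\<beta>(v := \<eta>))"
  unfolding switched_hom_on_def
proof (intro ballI impI)
  fix a b assume ab: "a \<in> H" "b \<in> H" and e: "{a, b} \<in> E"
  consider "a = v" "b \<noteq> v" | "a \<noteq> v" "b = v" | "a \<noteq> v" "b \<noteq> v"
    using e loopfree by blast
  then show "(c(v := x)) a \<noteq> (c(v := x)) b \<and>
      (t {(c(v := x)) a, (c(v := x)) b} \<longleftrightarrow> (s {a, b} \<longleftrightarrow> ((\<beta>(v := \<eta>)) a \<longleftrightarrow> (\<beta>(v := \<eta>)) b)))"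
  proof cases
    case 1
    then have "b \<in> neighbors_in E H v" using ab e by (auto simp: neighbors_in_def insert_commute)
    then show ?thesis using new 1 by auto
  next
    case 2
    then have "a \<in> neighbors_in E H v" using ab e by (auto simp: neighbors_in_def)
    then show ?thesis using new 2 by (auto simp: insert_commute)
  next
    case 3
    then show ?thesis using hom ab e by (simp add: switched_hom_on_def)
  qed
qed

lemma coherent_frontier_extend:
  assumes coh: "coherent_frontier V E s (H - {v}) c \<beta>"
    and fresh: "x \<notin> forbidden_colors V E H c v"
  shows "coherent_frontier V E s H (c(v := x)) (\<beta>(v := \<eta>))"
  unfolding coherent_frontier_def
proof (intro ballI impI)
  fix w a b assume w: "w \<in> V - H" and ab: "a \<in> H" "b \<in> H"
    and ea: "{w, a} \<in> E" and eb: "{w, b} \<in> E" and same: "(c(v := x)) a = (c(v := x)) b"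
  have not_x: "c u \<noteq> x" if "u \<in> H" "u \<noteq> v" "{w, u} \<in> E" "{w, v} \<in> E" for u
  proof -
    have "w \<in> neighbors_in E (V - H) v" "u \<in> neighbors_in E H w - {v}"
      using that w by (auto simp: neighbors_in_def insert_commute)
    then show ?thesis using fresh by (force simp: forbidden_colors_def)
  qed
  show "(s {w, a} \<longleftrightarrow> (\<beta>(v := \<eta>)) a) \<longleftrightarrow> (s {w, b} \<longleftrightarrow> (\<beta>(v := \<eta>)) b)"
  proof (cases "a = v \<or> b = v")
    case True
    then show ?thesis using same not_x ab ea eb by (cases "a = v"; cases "b = v") auto
  next
    case False
    then show ?thesis using coh w ab ea eb same by (simp add: coherent_frontier_def)
  qed
qed

lemma extend_to_reducible_vertex:
  fixes N :: nat and t :: "'c set \<Rightarrow> bool"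
  assumes ext: "\<And>Y \<tau>. card Y \<le> 3 \<Longrightarrow> 4 * N \<le> 4 * card (extensions t Y \<tau>) + (N + 2) * card Y"
    and finV: "finite V" and loopfree: "{v, v} \<notin> E" and H: "H \<subseteq> V" "v \<in> H"
    and reducible: "4 * load V E H v + (N + 2) * degree_in E H v < 4 * N"
    and hom: "switched_hom_on E s t (H - {v}) c \<beta>" and coh: "coherent_frontier V E s (H - {v}) c \<beta>"
  shows "\<exists>c' \<beta>'. switched_hom_on E s t H c' \<beta>' \<and> coherent_frontier V E s H c' \<beta>'"
proof -
  define A where "A = neighbors_in E H v"
  define \<tau> where "\<tau> y \<longleftrightarrow> (\<exists>a\<in>A. c a = y \<and> (s {v, a} \<longleftrightarrow> \<beta> a))" for y
  have agree: "(s {v, a'} \<longleftrightarrow> \<beta> a') \<longleftrightarrow> (s {v, a} \<longleftrightarrow> \<beta> a)"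
    if "a \<in> A" "a' \<in> A" "c a' = c a" for a a'
  proof -
    have "v \<in> V - (H - {v})" "a \<in> H - {v}" "a' \<in> H - {v}" "{v, a} \<in> E" "{v, a'} \<in> E"
      using that H loopfree by (auto simp: A_def neighbors_in_def insert_commute)
    then show ?thesis using coh \<open>c a' = c a\<close> unfolding coherent_frontier_def by blast
  qed
  have \<tau>: "\<tau> (c a) \<longleftrightarrow> (s {v, a} \<longleftrightarrow> \<beta> a)" if "a \<in> A" for a
    using that agree unfolding \<tau>_def by blast
  have finH: "finite H" using finV H(1) by (rule finite_subset[rotated])
  have "card (c ` A) \<le> degree_in E H v"
    unfolding A_def degree_in_def using finH by (intro card_image_le) simp
  moreover have "degree_in E H v \<le> 3" using reducible by (rule reducible_degree_le_3)
  ultimately have "4 * N \<le> 4 * card (extensions t (c ` A) \<tau>) + (N + 2) * degree_in E H v"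
    using ext[of "c ` A" \<tau>] by (meson add_le_mono le_trans mult_le_mono2 order_refl)
  moreover have "card (forbidden_colors V E H c v) \<le> load V E H v"
    using finV H by (rule card_forbidden_colors_le_load)
  ultimately have "card (forbidden_colors V E H c v) < card (extensions t (c ` A) \<tau>)"
    using reducible by linarith
  moreover have "finite (forbidden_colors V E H c v)"
    using finH finV by (simp add: forbidden_colors_def)
  ultimately obtain x where x: "x \<in> extensions t (c ` A) \<tau>" "x \<notin> forbidden_colors V E H c v"
    by (metis card_mono leD subsetI)
  then obtain \<eta> where \<eta>: "\<forall>a\<in>A. c a \<noteq> x \<and> (t {x, c a} \<longleftrightarrow> (\<eta> \<longleftrightarrow> (s {v, a} \<longleftrightarrow> \<beta> a)))"
    using \<tau> by (auto simp: extensions_def)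
  have "switched_hom_on E s t H (c(v := x)) (\<beta>(v := \<eta>))"
    using hom loopfree \<eta> unfolding A_def by (rule switched_hom_on_extend)
  moreover have "coherent_frontier V E s H (c(v := x)) (\<beta>(v := \<eta>))"
    using coh x(2) by (rule coherent_frontier_extend)
  ultimately show ?thesis by blast
qed

lemma degree_in_Diff_le_3:
  assumes "finite H" "{v, v} \<notin> E" "degree_in E H v \<le> 3"
    and "\<forall>w\<in>V - H. degree_in E H w \<le> 3"
  shows "\<forall>w\<in>V - (H - {v}). degree_in E (H - {v}) w \<le> 3"
proof
  fix w assume w: "w \<in> V - (H - {v})"
  show "degree_in E (H - {v}) w \<le> 3"
  proof (cases "w = v")
    case True
    have "neighbors_in E (H - {v}) v = neighbors_in E H v"
      using assms(2) by (auto simp: neighbors_in_def)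
    then show ?thesis using True assms(3) by (simp add: degree_in_def)
  next
    case False
    have "degree_in E (H - {v}) w \<le> degree_in E H w" by (rule degree_in_mono[OF assms(1)]) auto
    also have "\<dots> \<le> 3" using False w assms(4) by simp
    finally show ?thesis .
  qed
qed

lemma switched_hom_exists:
  fixes N :: nat and t :: "'c set \<Rightarrow> bool"
  assumes ext: "\<And>Y \<tau>. card Y \<le> 3 \<Longrightarrow> 4 * N \<le> 4 * card (extensions t Y \<tau>) + (N + 2) * card Y"
    and finV: "finite V" and edges: "\<forall>e\<in>E. e \<subseteq> V \<and> card e = 2"
    and sparse: "\<And>S. S \<subseteq> V \<Longrightarrow> S \<noteq> {} \<Longrightarrow> (N + 2) * card {e\<in>E. e \<subseteq> S} < 2 * N * card S"
    and N: "6 \<le> N"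
  shows "\<exists>(c :: 'v \<Rightarrow> 'c) \<beta>. switched_hom_on E s t V c \<beta>"
proof -
  have loopfree: "{x, x} \<notin> E" for x using edges by auto
  have "\<exists>(c :: 'v \<Rightarrow> 'c) \<beta>. switched_hom_on E s t H c \<beta> \<and> coherent_frontier V E s H c \<beta>"
    if "H \<subseteq> V" "\<forall>w\<in>V - H. degree_in E H w \<le> 3" for H
    using that
  proof (induction "card H" arbitrary: H rule: less_induct)
    case less
    show ?case
    proof (cases "H = {}")
      case True
      then show ?thesis by (simp add: switched_hom_on_def coherent_frontier_def)
    next
      case False
      obtain v where v: "v \<in> H"
        and reducible: "4 * load V E H v + (N + 2) * degree_in E H v < 4 * N"
        using exists_reducible_vertex[OF finV edges sparse N less.prems(1) False less.prems(2)]
        by blast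
      have finH: "finite H" using finV less.prems(1) by (rule finite_subset[rotated])
      have "\<forall>w\<in>V - (H - {v}). degree_in E (H - {v}) w \<le> 3"
        using finH loopfree reducible_degree_le_3[OF reducible] less.prems(2)
        by (rule degree_in_Diff_le_3)
      moreover have "card (H - {v}) < card H" using finH v by (rule card_Diff1_less)
      ultimately obtain c :: "'v \<Rightarrow> 'c" and \<beta> where
        "switched_hom_on E s t (H - {v}) c \<beta>" "coherent_frontier V E s (H - {v}) c \<beta>"
        using less.hyps less.prems(1) by blast
      then show ?thesis
        using extend_to_reducible_vertex[OF ext finV loopfree less.prems(1) v reducible] by blast
    qed
  qed
  then show ?thesis by blast
qed

section \<open>Switching and the main theorem\<close>

definition switch_set :: "'v set \<Rightarrow> ('v set \<Rightarrow> bool) \<Rightarrow> 'v set \<Rightarrow> bool" where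
  "switch_set X s e \<longleftrightarrow> s e \<noteq> odd (card (e \<inter> X))"

lemma switching_equiv_switch_set:
  assumes "finite X" "X \<subseteq> V"
  shows "switching_equiv V s (switch_set X s)"
  using assms
proof (induction X rule: finite_induct)
  case empty
  have "switch_set {} s = s" by (simp add: switch_set_def fun_eq_iff)
  then show ?case by (simp add: switching_equiv_def)
next
  case (insert x X)
  have "switch_set (insert x X) s = switch x (switch_set X s)"
    using insert.hyps by (auto simp: fun_eq_iff switch_set_def switch_def Int_insert_right)
  moreover have "x \<in> V" using insert.prems by simp
  ultimately show ?case
    using insert unfolding switching_equiv_def by (auto intro: rtranclp.rtrancl_into_rtrancl)
qed

lemma switch_set_doubleton:
  "u \<noteq> v \<Longrightarrow> switch_set X s {u, v} \<longleftrightarrow> (s {u, v} \<longleftrightarrow> (u \<in> X \<longleftrightarrow> v \<in> X))"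
  by (cases "u \<in> X"; cases "v \<in> X") (simp_all add: switch_set_def Int_insert_left)

lemma signed_hom_if_switched_hom_on:
  assumes "signed_graph V E s" and hom: "switched_hom_on E s t V c \<beta>"
    and "\<forall>v\<in>V. c v \<in> W" and complete: "\<And>x y. x \<noteq> y \<Longrightarrow> {x, y} \<in> F"
  shows "signed_hom V E s W F t c"
proof -
  let ?X = "{v\<in>V. \<beta> v}"
  have finV: "finite V" and edges: "\<forall>e\<in>E. e \<subseteq> V \<and> card e = 2"
    using assms(1) by (simp_all add: signed_graph_def)
  have "{c u, c v} \<in> F \<and> t {c u, c v} = switch_set ?X s {u, v}" if "{u, v} \<in> E" for u v
  proof -
    have "u \<in> V" "v \<in> V" "u \<noteq> v" using that edges by (auto simp: card_2_iff)
    then show ?thesis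
      using that hom complete by (simp add: switched_hom_on_def switch_set_doubleton)
  qed
  moreover have "switching_equiv V s (switch_set ?X s)"
    using finV by (intro switching_equiv_switch_set) auto
  ultimately show ?thesis using assms(3) unfolding signed_hom_def by blast
qed

lemma edge_density_le_mad:
  assumes "finite V" "\<forall>e\<in>E. e \<subseteq> V" "S \<subseteq> V" "S \<noteq> {}"
  shows "2 * real (card {e\<in>E. e \<subseteq> S}) / real (card S) \<le> mad V E"
proof -
  have "finite E" by (rule finite_subset[of E "Pow V"]) (use assms(1,2) in auto)
  have "finite {2 * real (card E') / real (card V') | V' E'.
      V' \<subseteq> V \<and> V' \<noteq> {} \<and> E' \<subseteq> E \<and> (\<forall>e\<in>E'. e \<subseteq> V')}"
    by (rule finite_subset[of _ "(\<lambda>(V', E'). 2 * real (card E') / real (card V'))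
        ` (Pow V \<times> Pow E)"]) (use assms(1) \<open>finite E\<close> in auto)
  then show ?thesis unfolding mad_def by (rule Max_ge) (use assms(3,4) in blast)
qed

lemma sparse_if_mad_less:
  fixes N :: nat
  assumes "finite V" "\<forall>e\<in>E. e \<subseteq> V" and mad: "mad V E < 4 - 8 / (real N + 2)"
    and "S \<subseteq> V" "S \<noteq> {}"
  shows "(N + 2) * card {e\<in>E. e \<subseteq> S} < 2 * N * card S"
proof -
  define e where "e = real (card {e\<in>E. e \<subseteq> S})"
  define n where "n = real (card S)"
  have "2 * e / n \<le> mad V E"
    unfolding e_def n_def using assms(1,2,4,5) by (rule edge_density_le_mad)
  moreover have "n > 0" using assms(1,4,5) by (simp add: n_def card_gt_0_iff finite_subset)
  ultimately have "2 * e * (real N + 2) \<le> mad V E * (real N + 2) * n"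
    by (simp add: pos_divide_le_eq mult.commute mult.left_commute)
  also have "\<dots> < 4 * real N * n"
    using mad \<open>n > 0\<close> by (intro mult_strict_right_mono) (simp_all add: field_simps)
  finally have "real ((N + 2) * card {e\<in>E. e \<subseteq> S}) < real (2 * N * card S)"
    by (simp add: e_def n_def algebra_simps)
  then show ?thesis by (simp only: of_nat_less_iff)
qed

lemma doubleton_in_plus_E_SP:
  fixes x y :: "'a::field option"
  assumes "x \<noteq> y"
  shows "{x, y} \<in> plus_E SP_V SP_E"
  using assms
  by (cases x; cases y)
    (auto simp: plus_E_def SP_V_def SP_E_def insert_commute image_iff intro: exI[of _ "{_, _}"])

theorem theorem4:
  fixes V :: "'v set" and E :: "'v set set" and s :: "'v set \<Rightarrow> bool"
  assumes "finite (UNIV :: 'f::{finite,field} set)"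
    and "card (UNIV :: 'f set) > 9"
    and "card (UNIV :: 'f set) mod 4 = 1"
    and "signed_graph V E s"
    and "mad V E < 4 - 8 / (real (card (UNIV :: 'f set)) + 3)"
  shows "\<exists>\<phi>. signed_hom V E s (plus_V (SP_V :: 'f set)) (plus_E (SP_V :: 'f set) SP_E)
                 (plus_sign SP_sign) \<phi>"
proof -
  let ?N = "CARD('f option)"
  have N: "?N = CARD('f) + 1" by (simp add: card_UNIV_option)
  have graph: "finite V" "\<forall>e\<in>E. e \<subseteq> V \<and> card e = 2"
    using assms(4) by (simp_all add: signed_graph_def)
  have "mad V E < 4 - 8 / (real ?N + 2)" using assms(5) by (simp add: N add.commute)
  then have "(?N + 2) * card {e\<in>E. e \<subseteq> S} < 2 * ?N * card S" if "S \<subseteq> V" "S \<noteq> {}" for S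
    using sparse_if_mad_less[OF graph(1) _ _ that] graph(2) by blast
  then obtain c :: "'v \<Rightarrow> 'f option" and \<beta> where "switched_hom_on E s (plus_sign SP_sign) V c \<beta>"
    using switched_hom_exists[OF card_extensions_SP_plus[OF assms(3)] graph] assms(2) N by fastforce
  then have "signed_hom V E s (plus_V SP_V) (plus_E SP_V SP_E) (plus_sign SP_sign) c"
    using assms(4) doubleton_in_plus_E_SP
    by (intro signed_hom_if_switched_hom_on)
      (simp_all add: plus_V_def SP_V_def UNIV_option_conv[symmetric])
  then show ?thesis by blast
qed

end
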